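(* Let $p$ be an odd prime, $\gamma\ge1$, $0\le\rho\le\gamma$, and \[G=\langle a,b:[a,b]^{p^\gamma}=[a,b,a]=[a,b,b]=1,\ a^{p^\gamma}=[a,b]^{p^\rho},\ b^{p^\gamma}=1\rangle.\] Let $1\le\delta\le\gamma$. Then (1) $\langle a^{p^\delta},b^{p^\delta},[a,b]\rangle/\langle[a,b]^{p^\delta}\rangle\cong C_{p^{\gamma-\rho}}\times C_{p^{\gamma-\delta}}\times C_{p^\rho}$ if $\rho<\delta<\gamma-\rho$, and $\cong C_{p^{\gamma-\delta}}\times C_{p^{\gamma-\delta}}\times C_{p^\delta}$ otherwise; (2) $\langle a^{p^\delta},b^{p^\delta},[a,b]\rangle/\langle[a,b]^{p^{\delta-1}}\rangle\cong C_{p^{\gamma-\rho-1}}\times C_{p^{\gamma-\delta}}\times C_{p^\rho}$ if $\rho<\delta<\gamma-\rho$, and $\cong C_{p^{\gamma-\delta}}\times C_{p^{\gamma-\delta}}\times C_{p^{\delta-1}}$ otherwise.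
   Context: $[g,h]=g^{-1}h^{-1}gh$, $[x,y,z]=[[x,y],z]$; $C_m$ is the cyclic group of order $m$. (This group is the two-generator $p$-group of class 2 and order $p^{3\gamma}$ with parameters $(\alpha,\beta,\gamma;\rho,\sigma)=(\gamma,\gamma,\gamma;\rho,\gamma)$.) *)

theory Defs
  imports "HOL-Algebra.Algebra"
begin

definition commutator :: "('a, 'b) monoid_scheme \<Rightarrow> 'a \<Rightarrow> 'a \<Rightarrow> 'a" where
  "commutator G g h = inv\<^bsub>G\<^esub> g \<otimes>\<^bsub>G\<^esub> inv\<^bsub>G\<^esub> h \<otimes>\<^bsub>G\<^esub> g \<otimes>\<^bsub>G\<^esub> h"

abbreviation cyc :: "nat \<Rightarrow> int monoid" where
  "cyc m \<equiv> integer_mod_group m"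

text \<open>G is the group presented by generators a, b and the relations of the paper:
  G is generated by a, b, the relations hold, and G has order p^(3 gamma)
  (the order of the presented group, as stated in the paper); a group generated by
  two elements satisfying the relations is a quotient of the presented group, so the
  order condition pins G down up to isomorphism.\<close>
definition presented_G :: "('a, 'b) monoid_scheme \<Rightarrow> nat \<Rightarrow> nat \<Rightarrow> nat \<Rightarrow> 'a \<Rightarrow> 'a \<Rightarrow> bool" where
  "presented_G G p \<gamma> \<rho> a b \<longleftrightarrow>
     group G \<and> a \<in> carrier G \<and> b \<in> carrier G \<and>
     generate G {a, b} = carrier G \<and>
     commutator G a b [^]\<^bsub>G\<^esub> (p ^ \<gamma>) = \<one>\<^bsub>G\<^esub> \<and>
     commutator G (commutator G a b) a = \<one>\<^bsub>G\<^esub> \<and>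
     commutator G (commutator G a b) b = \<one>\<^bsub>G\<^esub> \<and>
     a [^]\<^bsub>G\<^esub> (p ^ \<gamma>) = commutator G a b [^]\<^bsub>G\<^esub> (p ^ \<rho>) \<and>
     b [^]\<^bsub>G\<^esub> (p ^ \<gamma>) = \<one>\<^bsub>G\<^esub> \<and>
     finite (carrier G) \<and> card (carrier G) = p ^ (3 * \<gamma>)"

end

theory Submission
  imports Defs
begin

text \<open>
  The commutator c = [a, b] is central, so every element of G can be written a^i b^j c^k,
  and a^i b^j c^k * a^i' b^j' c^k' = a^(i+i') b^(j+j') c^(k+k'-j i'). The relations reduce
  the exponents to 0 \<le> i, j, k < p^\<gamma>; as G has exactly p^(3\<gamma>) elements, this reduced form
  is unique. Hence K consists of the a^(P i) b^(P j) c^k with P = p^\<delta>, and for d \<le> \<delta> the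
  cross term c^(P^2 j i') lies in H = \<langle>c^(p^d)\<rangle>. So K/H is the image of \<int>^3 under a
  homomorphism whose kernel is the lattice of all (i, j, k) with p^(\<gamma>-\<delta>) dividing i and j
  and p^d dividing k + p^\<rho> (i div p^(\<gamma>-\<delta>)). Diagonalising this lattice gives cyclic
  factors of orders p^(\<gamma>-\<delta>+d-\<rho>), p^(\<gamma>-\<delta>), p^\<rho> when \<rho> \<le> d and \<rho> < \<gamma>-\<delta>, and
  p^(\<gamma>-\<delta>), p^(\<gamma>-\<delta>), p^d otherwise. The two claims are the cases d = \<delta> and d = \<delta>-1.
\<close>

lemma (in group) inv_m_cancel_left [simp]:
  "x \<in> carrier G \<Longrightarrow> y \<in> carrier G \<Longrightarrow> inv x \<otimes> (x \<otimes> y) = y"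
  by (simp add: m_assoc [symmetric])

lemma (in group) m_inv_cancel_left [simp]:
  "x \<in> carrier G \<Longrightarrow> y \<in> carrier G \<Longrightarrow> x \<otimes> (inv x \<otimes> y) = y"
  by (simp add: m_assoc [symmetric])

lemma (in group) conj_int_pow:
  assumes g: "g \<in> carrier G" and x: "x \<in> carrier G"
  shows "g \<otimes> x [^] (i::int) \<otimes> inv g = (g \<otimes> x \<otimes> inv g) [^] i"
proof -
  have "(\<lambda>u. g \<otimes> u \<otimes> inv g) \<in> hom G G"
    by (rule homI) (simp_all add: g m_assoc)
  from hom_int_pow[OF this x is_group is_group] show ?thesis by simp
qed

lemma (in group) commute_int_pow:
  assumes x: "x \<in> carrier G" and y: "y \<in> carrier G" and xy: "x \<otimes> y = y \<otimes> x"
  shows "x [^] (i::int) \<otimes> y [^] (j::int) = y [^] j \<otimes> x [^] i"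
proof -
  have conj_pow: "g \<otimes> h [^] (n::int) = h [^] n \<otimes> g"
    if g: "g \<in> carrier G" and h: "h \<in> carrier G" and gh: "g \<otimes> h = h \<otimes> g" for g h n
  proof -
    have "g \<otimes> h \<otimes> inv g = h" using g h gh by (simp add: inv_solve_right')
    then have "g \<otimes> h [^] n \<otimes> inv g = h [^] n" using conj_int_pow[OF g h] by simp
    then show ?thesis using g h by (simp add: inv_solve_right')
  qed
  have "x \<otimes> y [^] j = y [^] j \<otimes> x" using x y xy by (rule conj_pow)
  then have "y [^] j \<otimes> x [^] i = x [^] i \<otimes> y [^] j" using x y by (intro conj_pow) simp_all
  then show ?thesis by simp
qed

lemma (in group) int_pow_commutation:
  assumes x: "x \<in> carrier G" and y: "y \<in> carrier G" and z: "z \<in> carrier G"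
    and yx: "y \<otimes> x = x \<otimes> y \<otimes> z" and xz: "x \<otimes> z = z \<otimes> x" and yz: "y \<otimes> z = z \<otimes> y"
  shows "y [^] (j::int) \<otimes> x [^] (i::int) = x [^] i \<otimes> y [^] j \<otimes> z [^] (i * j)"
proof -
  \<comment> \<open>Conjugation by x^-1 maps y to y z, hence y^j to y^j z^j; then conjugation by y^j
    maps x to x z^j, hence x^i to x^i z^(i j).\<close>
  define Y Z where "Y = y [^] j" and "Z = z [^] j"
  have YZ: "Y \<in> carrier G" "Z \<in> carrier G" using y z by (simp_all add: Y_def Z_def)
  have "inv x \<otimes> y \<otimes> inv (inv x) = y \<otimes> z" using x y z yx by (simp add: m_assoc)
  then have "inv x \<otimes> Y \<otimes> x = (y \<otimes> z) [^] j" using conj_int_pow[of "inv x" y j] x y by (simp add: Y_def)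
  also have "\<dots> = Y \<otimes> Z" unfolding Y_def Z_def using yz y z by (rule int_pow_mult_distrib)
  finally have "Y \<otimes> x = x \<otimes> Y \<otimes> Z" using x YZ by (simp add: inv_solve_left' m_assoc)
  moreover have "Y \<otimes> Z = Z \<otimes> Y" and xZ: "x \<otimes> Z = Z \<otimes> x"
    using commute_int_pow[OF y z yz, of j j] commute_int_pow[OF x z xz, of 1 j] x
    by (simp_all add: Y_def Z_def)
  ultimately have "Y \<otimes> x \<otimes> inv Y = x \<otimes> Z" using x YZ by (simp add: inv_solve_right' m_assoc)
  then have "Y \<otimes> x [^] i \<otimes> inv Y = (x \<otimes> Z) [^] i" using conj_int_pow[OF _ x] YZ by simp
  also have "\<dots> = x [^] i \<otimes> z [^] (i * j)"
    using int_pow_mult_distrib[OF xZ x] YZ z by (simp add: Z_def int_pow_pow mult.commute)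
  finally have "Y \<otimes> x [^] i = x [^] i \<otimes> z [^] (i * j) \<otimes> Y" using x YZ z by (simp add: inv_solve_right')
  also have "\<dots> = x [^] i \<otimes> Y \<otimes> z [^] (i * j)"
    using commute_int_pow[OF z y yz[symmetric], of "i * j" j] x y z by (simp add: Y_def m_assoc)
  finally show ?thesis by (simp add: Y_def)
qed

lemma (in group) commute_of_commutator_eq_one:
  assumes "x \<in> carrier G" "y \<in> carrier G" "commutator G x y = \<one>"
  shows "x \<otimes> y = y \<otimes> x"
  using assms by (simp add: commutator_def m_assoc inv_solve_left' flip: inv_mult_group)

lemma (in group) int_pow_mod:
  assumes "x \<in> carrier G" "x [^] (n::int) = \<one>"
  shows "x [^] (i::int) = x [^] (i mod n)"
proof -
  have "x [^] i = (x [^] n) [^] (i div n) \<otimes> x [^] (i mod n)"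
    using assms(1) by (simp add: int_pow_pow flip: int_pow_mult)
  then show ?thesis using assms by simp
qed

lemma additive_mod_invariant:
  fixes Q :: "('c, 'd) monoid_scheme" and \<phi> :: "int \<Rightarrow> int \<Rightarrow> int \<Rightarrow> 'c" and n1 n2 n3 :: int
  assumes "group Q"
    and closed: "\<And>u v w. \<phi> u v w \<in> carrier Q"
    and add: "\<And>u v w u' v' w'. \<phi> (u + u') (v + v') (w + w') = \<phi> u v w \<otimes>\<^bsub>Q\<^esub> \<phi> u' v' w'"
    and vanish: "\<And>u v w. n1 dvd u \<Longrightarrow> n2 dvd v \<Longrightarrow> n3 dvd w \<Longrightarrow> \<phi> u v w = \<one>\<^bsub>Q\<^esub>"
  shows "\<phi> (u mod n1) (v mod n2) (w mod n3) = \<phi> u v w"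
proof -
  interpret Q: group Q by fact
  have "\<phi> u v w = \<phi> (u mod n1 + n1 * (u div n1)) (v mod n2 + n2 * (v div n2)) (w mod n3 + n3 * (w div n3))"
    by simp
  also have "\<dots> = \<phi> (u mod n1) (v mod n2) (w mod n3) \<otimes>\<^bsub>Q\<^esub> \<phi> (n1 * (u div n1)) (n2 * (v div n2)) (n3 * (w div n3))"
    by (rule add)
  also have "\<phi> (n1 * (u div n1)) (n2 * (v div n2)) (n3 * (w div n3)) = \<one>\<^bsub>Q\<^esub>"
    by (simp add: vanish)
  finally show ?thesis using closed by simp
qed

lemma iso_cyc3I:
  fixes Q :: "('c, 'd) monoid_scheme" and \<phi> :: "int \<Rightarrow> int \<Rightarrow> int \<Rightarrow> 'c" and n1 n2 n3 :: nat
  assumes Q: "group Q" and "0 < n1" "0 < n2" "0 < n3"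
    and closed: "\<And>u v w. \<phi> u v w \<in> carrier Q"
    and add: "\<And>u v w u' v' w'. \<phi> (u + u') (v + v') (w + w') = \<phi> u v w \<otimes>\<^bsub>Q\<^esub> \<phi> u' v' w'"
    and ker: "\<And>u v w. \<phi> u v w = \<one>\<^bsub>Q\<^esub> \<longleftrightarrow> int n1 dvd u \<and> int n2 dvd v \<and> int n3 dvd w"
    and surj: "\<And>q. q \<in> carrier Q \<Longrightarrow> \<exists>u v w. q = \<phi> u v w"
  shows "Q \<cong> cyc n1 \<times>\<times> (cyc n2 \<times>\<times> cyc n3)"
proof -
  let ?T = "cyc n1 \<times>\<times> (cyc n2 \<times>\<times> cyc n3)"
  let ?\<psi> = "\<lambda>(u, v, w). \<phi> u v w"
  have T: "group ?T" by (intro DirProd_group group_integer_mod_group)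
  have carrier_T: "carrier ?T = {0..<int n1} \<times> {0..<int n2} \<times> {0..<int n3}"
    using assms(2-4) by (simp add: carrier_integer_mod_group)
  have \<phi>_mod: "\<phi> (u mod n1) (v mod n2) (w mod n3) = \<phi> u v w" for u v w :: int
    using additive_mod_invariant[of Q \<phi> n1 n2 n3] assms by simp
  have "?\<psi> \<in> hom ?T Q"
  proof (rule homI)
    fix x y assume "x \<in> carrier ?T" "y \<in> carrier ?T"
    obtain u v w u' v' w' where "x = (u, v, w)" "y = (u', v', w')" by (cases x, cases y) auto
    then have "?\<psi> (x \<otimes>\<^bsub>?T\<^esub> y) = \<phi> ((u + u') mod n1) ((v + v') mod n2) ((w + w') mod n3)"
      by simp
    also have "\<dots> = ?\<psi> x \<otimes>\<^bsub>Q\<^esub> ?\<psi> y"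
      unfolding \<phi>_mod add using \<open>x = (u, v, w)\<close> \<open>y = (u', v', w')\<close> by simp
    finally show "?\<psi> (x \<otimes>\<^bsub>?T\<^esub> y) = ?\<psi> x \<otimes>\<^bsub>Q\<^esub> ?\<psi> y" .
  qed (auto simp: closed)
  then interpret \<psi>: group_hom ?T Q ?\<psi> by (simp add: group_hom_def group_hom_axioms_def T Q)
  have "?\<psi> \<in> iso ?T Q"
  proof (unfold \<psi>.iso_iff, intro conjI subsetI ballI impI)
    fix q assume "q \<in> carrier Q"
    then obtain u v w where "q = \<phi> u v w" using surj by blast
    then have "q = \<phi> (u mod n1) (v mod n2) (w mod n3)" by (simp only: \<phi>_mod)
    moreover have "(u mod n1, v mod n2, w mod n3) \<in> carrier ?T" using carrier_T assms(2-4) by simp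
    ultimately show "q \<in> ?\<psi> ` carrier ?T" by force
  next
    have zero: "z = 0" if "0 \<le> z" "z < n" "n dvd z" for z n :: int
      using that zdvd_not_zless by force
    fix x assume x: "x \<in> carrier ?T" "?\<psi> x = \<one>\<^bsub>Q\<^esub>"
    obtain u v w where "x = (u, v, w)" by (cases x) auto
    with x have "0 \<le> u \<and> u < n1 \<and> n1 dvd u" "0 \<le> v \<and> v < n2 \<and> n2 dvd v" "0 \<le> w \<and> w < n3 \<and> n3 dvd w"
      unfolding carrier_T by (simp_all add: ker)
    then have "u = 0" "v = 0" "w = 0" using zero by blast+
    with \<open>x = (u, v, w)\<close> show "x = \<one>\<^bsub>?T\<^esub>" by simp
  qed
  then show ?thesis using group.iso_sym[OF T] unfolding is_iso_def by blast
qed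

text \<open>
  In the coordinates (i, k) of a^(P i) c^k, the relations of K/H form the lattice of all (i, k)
  with M dvd i and D dvd k + R (i div M). The next two changes of coordinates carry it onto
  a product of principal ideals, i.e. they are its Smith normal form in the two cases.
\<close>

lemma relation_lattice_split_coords:
  fixes M R S e u w :: int
  assumes eR: "e * R = M" and "M \<noteq> 0" "R \<noteq> 0"
  shows "M dvd u + e * w \<and> R * S dvd - w + R * ((u + e * w) div M) \<longleftrightarrow> M * S dvd u \<and> R dvd w"
proof
  assume lhs: "M dvd u + e * w \<and> R * S dvd - w + R * ((u + e * w) div M)"
  then obtain t where t: "u + e * w = M * t" by blast
  with lhs \<open>M \<noteq> 0\<close> have RS: "R * S dvd R * t - w" by simp
  have "R dvd R * t - (R * t - w)" using dvd_diff[OF dvd_triv_left dvd_mult_left[OF RS]] .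
  then have "R dvd w" by simp
  then obtain s where s: "w = R * s" by blast
  with RS \<open>R \<noteq> 0\<close> have "S dvd t - s" by (simp add: right_diff_distrib[symmetric])
  moreover have "u = M * (t - s)" using t unfolding s eR[symmetric] by (simp add: algebra_simps)
  ultimately show "M * S dvd u \<and> R dvd w" using \<open>R dvd w\<close> by simp
next
  assume "M * S dvd u \<and> R dvd w"
  then obtain r s where r: "u = M * S * r" and s: "w = R * s" by blast
  then have x: "u + e * w = M * (S * r + s)" using eR by (simp add: algebra_simps)
  with \<open>M \<noteq> 0\<close> have "- w + R * ((u + e * w) div M) = R * S * r" using s by (simp add: algebra_simps)
  with x show "M dvd u + e * w \<and> R * S dvd - w + R * ((u + e * w) div M)" by simp
qed

lemma relation_lattice_diag_coords:
  fixes M R D f u w :: int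
  assumes "D dvd R - f * M"
  shows "M dvd u \<and> D dvd w - f * u + R * (u div M) \<longleftrightarrow> M dvd u \<and> D dvd w"
proof (cases "M dvd u")
  case True
  then obtain t where t: "u = M * t" by blast
  have "D dvd w - f * u + R * (u div M) \<longleftrightarrow> D dvd w"
  proof (cases "M = 0")
    case False
    then have "w - f * u + R * (u div M) = w + (R - f * M) * t" using t by (simp add: algebra_simps)
    moreover have "D dvd (R - f * M) * t" using assms by simp
    ultimately show ?thesis using dvd_add_left_iff by metis
  qed (use t in simp)
  with True show ?thesis by simp
qed simp

locale presented_group = group G for G (structure) +
  fixes p \<gamma> \<rho> :: nat and a b :: 'a
  assumes presented: "presented_G G p \<gamma> \<rho> a b" and p_pos: "0 < p"
begin

abbreviation c :: 'a where "c \<equiv> commutator G a b"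

lemma a_closed [simp]: "a \<in> carrier G" and b_closed [simp]: "b \<in> carrier G"
  using presented by (simp_all add: presented_G_def)

lemma c_closed [simp]: "c \<in> carrier G"
  by (simp add: commutator_def)

lemma pow_p_power: "x [^] (p ^ n) = x [^] (int p ^ n)"
  by (simp flip: int_pow_int)

lemma a_pow_top: "a [^] (int p ^ \<gamma>) = c [^] (int p ^ \<rho>)"
  and b_pow_top: "b [^] (int p ^ \<gamma>) = \<one>"
  and c_pow_top: "c [^] (int p ^ \<gamma>) = \<one>"
  using presented by (simp_all add: presented_G_def flip: pow_p_power)

lemma c_a: "c \<otimes> a = a \<otimes> c" and c_b: "c \<otimes> b = b \<otimes> c"
  using presented by (simp_all add: presented_G_def commute_of_commutator_eq_one)

lemma b_a: "b \<otimes> a = a \<otimes> b \<otimes> inv c"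
  by (simp add: commutator_def m_assoc inv_mult_group)

definition nf :: "int \<Rightarrow> int \<Rightarrow> int \<Rightarrow> 'a" where
  "nf i j k = a [^] i \<otimes> b [^] j \<otimes> c [^] k"

lemma nf_closed [simp]: "nf i j k \<in> carrier G"
  by (simp add: nf_def)

lemma nf_zero [simp]: "nf 0 0 0 = \<one>"
  by (simp add: nf_def)

lemma nf_mult: "nf i j k \<otimes> nf i' j' k' = nf (i + i') (j + j') (k + k' - j * i')"
proof -
  have c_a_left: "c [^] m \<otimes> (a [^] n \<otimes> x) = a [^] n \<otimes> (c [^] m \<otimes> x)"
    and c_b_left: "c [^] m \<otimes> (b [^] n \<otimes> x) = b [^] n \<otimes> (c [^] m \<otimes> x)"
    if "x \<in> carrier G" for m n :: int and x
    using commute_int_pow[OF c_closed a_closed c_a, of m n] commute_int_pow[OF c_closed b_closed c_b, of m n]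
      that by (simp_all flip: m_assoc)
  have inv_c_a: "a \<otimes> inv c = inv c \<otimes> a" and inv_c_b: "b \<otimes> inv c = inv c \<otimes> b"
    using commute_int_pow[OF c_closed a_closed c_a, of "-1" 1] commute_int_pow[OF c_closed b_closed c_b, of "-1" 1]
    by (simp_all add: int_pow_neg)
  have "b [^] m \<otimes> a [^] n = a [^] n \<otimes> b [^] m \<otimes> c [^] (- (n * m))" for m n :: int
    using int_pow_commutation[OF a_closed b_closed inv_closed[OF c_closed] b_a inv_c_a inv_c_b, of m n]
    by (simp add: int_pow_inv int_pow_neg)
  then have b_a_left: "b [^] m \<otimes> (a [^] n \<otimes> x) = a [^] n \<otimes> (b [^] m \<otimes> (c [^] (- (n * m)) \<otimes> x))"
    if "x \<in> carrier G" for m n :: int and x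
    using that by (simp flip: m_assoc)
  have "nf i j k \<otimes> nf i' j' k' = a [^] i \<otimes> (a [^] i' \<otimes> (b [^] j \<otimes> (b [^] j' \<otimes> (c [^] (- (i' * j)) \<otimes> (c [^] k \<otimes> c [^] k')))))"
    by (simp add: nf_def m_assoc c_a_left c_b_left b_a_left)
  also have "\<dots> = nf (i + i') (j + j') (- (i' * j) + (k + k'))"
    unfolding nf_def int_pow_mult[OF a_closed] int_pow_mult[OF b_closed] int_pow_mult[OF c_closed]
    by (simp add: m_assoc)
  finally show ?thesis by (simp add: algebra_simps)
qed

lemma nf_inv: "inv (nf i j k) = nf (- i) (- j) (- k - i * j)"
  by (rule inv_equality) (simp_all add: nf_mult algebra_simps)

lemma nf_lattice_subgroup: "subgroup {nf (P * i) (P * j) k | i j k. True} G"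
proof (rule subgroupI)
  fix x assume "x \<in> {nf (P * i) (P * j) k | i j k. True}"
  then obtain i j k where x: "x = nf (P * i) (P * j) k" by blast
  then have "inv x = nf (P * - i) (P * - j) (- k - P * i * (P * j))" by (simp add: nf_inv)
  then show "inv x \<in> {nf (P * i) (P * j) k | i j k. True}" by blast
next
  fix x y assume "x \<in> {nf (P * i) (P * j) k | i j k. True}" "y \<in> {nf (P * i) (P * j) k | i j k. True}"
  then obtain i j k i' j' k' where "x = nf (P * i) (P * j) k" "y = nf (P * i') (P * j') k'" by blast
  then have "x \<otimes> y = nf (P * (i + i')) (P * (j + j')) (k + k' - P * j * (P * i'))"
    by (simp add: nf_mult algebra_simps)
  then show "x \<otimes> y \<in> {nf (P * i) (P * j) k | i j k. True}" by blast
qed auto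

lemma carrier_nf: "carrier G = {nf i j k | i j k. True}"
proof
  have "a = nf (1 * 1) (1 * 0) 0" "b = nf (1 * 0) (1 * 1) 0" by (simp_all add: nf_def)
  then have "generate G {a, b} \<subseteq> {nf (1 * i) (1 * j) k | i j k. True}"
    by (intro generate_subgroup_incl nf_lattice_subgroup) blast
  then show "carrier G \<subseteq> {nf i j k | i j k. True}"
    using presented by (simp add: presented_G_def)
qed auto

lemma nf_reduce:
  "nf i j k = nf (i mod int p ^ \<gamma>) (j mod int p ^ \<gamma>) ((k + int p ^ \<rho> * (i div int p ^ \<gamma>)) mod int p ^ \<gamma>)"
proof -
  let ?N = "int p ^ \<gamma>" and ?q = "i div int p ^ \<gamma>"
  have "nf (?N * ?q) 0 0 = (a [^] ?N) [^] ?q" by (simp add: nf_def int_pow_pow)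
  also have "\<dots> = nf 0 0 (int p ^ \<rho> * ?q)" by (simp add: a_pow_top nf_def int_pow_pow)
  finally have a_top: "nf (?N * ?q) 0 0 = nf 0 0 (int p ^ \<rho> * ?q)" .
  have "nf i j k = nf (?N * ?q) 0 0 \<otimes> nf (i mod ?N) j k" by (simp add: nf_mult)
  also have "\<dots> = nf (i mod ?N) j (k + int p ^ \<rho> * ?q)" by (simp add: a_top nf_mult add.commute)
  also have "\<dots> = nf (i mod ?N) (j mod ?N) ((k + int p ^ \<rho> * ?q) mod ?N)"
    unfolding nf_def using int_pow_mod[OF b_closed b_pow_top] int_pow_mod[OF c_closed c_pow_top] by metis
  finally show ?thesis .
qed

text \<open>Uniqueness of the reduced form is where the order p^(3\<gamma>) of G enters: the p^(3\<gamma>)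
  reduced words already cover G.\<close>

lemma inj_on_nf: "inj_on (\<lambda>(i, j, k). nf i j k) ({0..<int p ^ \<gamma>} \<times> {0..<int p ^ \<gamma>} \<times> {0..<int p ^ \<gamma>})"
proof (rule eq_card_imp_inj_on)
  let ?B = "{0..<int p ^ \<gamma>} \<times> {0..<int p ^ \<gamma>} \<times> {0..<int p ^ \<gamma>}"
  have "carrier G \<subseteq> (\<lambda>(i, j, k). nf i j k) ` ?B"
  proof
    fix x assume "x \<in> carrier G"
    then obtain i j k where "x = nf i j k" using carrier_nf by blast
    then have "x = (\<lambda>(i, j, k). nf i j k)
        (i mod int p ^ \<gamma>, j mod int p ^ \<gamma>, (k + int p ^ \<rho> * (i div int p ^ \<gamma>)) mod int p ^ \<gamma>)"
      by (simp flip: nf_reduce)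
    moreover have "(i mod int p ^ \<gamma>, j mod int p ^ \<gamma>, (k + int p ^ \<rho> * (i div int p ^ \<gamma>)) mod int p ^ \<gamma>) \<in> ?B"
      using p_pos by simp
    ultimately show "x \<in> (\<lambda>(i, j, k). nf i j k) ` ?B" by blast
  qed
  then have "(\<lambda>(i, j, k). nf i j k) ` ?B = carrier G" by auto
  moreover have "card ?B = p ^ (\<gamma> + \<gamma> + \<gamma>)"
    by (simp add: card_cartesian_product power_add flip: of_nat_power)
  ultimately show "card ((\<lambda>(i, j, k). nf i j k) ` ?B) = card ?B"
    using presented by (simp add: presented_G_def numeral_3_eq_3 add.assoc)
qed simp

lemma nf_eq_one_iff:
  "nf i j k = \<one> \<longleftrightarrow> int p ^ \<gamma> dvd i \<and> int p ^ \<gamma> dvd j \<and> int p ^ \<gamma> dvd k + int p ^ \<rho> * (i div int p ^ \<gamma>)"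
proof -
  let ?N = "int p ^ \<gamma>"
  let ?r = "(i mod ?N, j mod ?N, (k + int p ^ \<rho> * (i div ?N)) mod ?N)"
  have "nf i j k = \<one> \<longleftrightarrow> (\<lambda>(i, j, k). nf i j k) ?r = (\<lambda>(i, j, k). nf i j k) (0, 0, 0)"
    by (simp flip: nf_reduce)
  also have "\<dots> \<longleftrightarrow> ?r = (0, 0, 0)"
    using p_pos by (intro inj_on_eq_iff[OF inj_on_nf]) auto
  finally show ?thesis by (simp add: dvd_eq_mod_eq_0)
qed

end

locale presented_quotient = presented_group +
  fixes \<delta> d :: nat
  assumes d_le_delta: "d \<le> \<delta>" and delta_le_gamma: "\<delta> \<le> \<gamma>"
begin

abbreviation H :: "'a set" where "H \<equiv> generate G {c [^] (p ^ d)}"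
abbreviation K :: "'a set" where "K \<equiv> generate G {a [^] (p ^ \<delta>), b [^] (p ^ \<delta>), c}"
abbreviation Q :: "'a set monoid" where "Q \<equiv> G\<lparr>carrier := K\<rparr> Mod H"

lemma H_eq: "H = {nf 0 0 (int p ^ d * m) | m. True}"
  by (simp add: generate_pow pow_p_power int_pow_pow nf_def)

lemma H_subgroup: "subgroup H G"
  by (rule generate_is_subgroup) simp

lemma nf_eq_central_iff: "nf i j k = nf 0 0 t \<longleftrightarrow> nf i j (k - t) = \<one>"
proof -
  have "nf i j k = nf 0 0 t \<otimes> nf i j (k - t)" by (simp add: nf_mult)
  then show ?thesis by simp
qed

lemma nf_mem_H_iff:
  "nf i j k \<in> H \<longleftrightarrow>
     int p ^ \<gamma> dvd i \<and> int p ^ \<gamma> dvd j \<and> int p ^ d dvd k + int p ^ \<rho> * (i div int p ^ \<gamma>)"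
proof -
  have D_N: "int p ^ d dvd int p ^ \<gamma>" using d_le_delta delta_le_gamma by (simp add: le_imp_power_dvd)
  have "(\<exists>m. int p ^ \<gamma> dvd x - int p ^ d * m) \<longleftrightarrow> int p ^ d dvd x" for x
  proof
    assume "\<exists>m. int p ^ \<gamma> dvd x - int p ^ d * m"
    then obtain m where "int p ^ d dvd x - int p ^ d * m" using D_N dvd_trans by blast
    then have "int p ^ d dvd (x - int p ^ d * m) + int p ^ d * m" by (rule dvd_add) simp
    then show "int p ^ d dvd x" by simp
  next
    assume "int p ^ d dvd x"
    then obtain m where "x = int p ^ d * m" ..
    then show "\<exists>m. int p ^ \<gamma> dvd x - int p ^ d * m" by (intro exI[of _ m]) simp
  qed
  then show ?thesis
    by (simp add: H_eq nf_eq_central_iff nf_eq_one_iff algebra_simps)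
qed

lemma H_central: "h \<in> H \<Longrightarrow> x \<in> carrier G \<Longrightarrow> x \<otimes> h = h \<otimes> x"
  unfolding H_eq carrier_nf by (auto simp: nf_mult add.commute)

lemma H_normal: "H \<lhd> G"
proof (rule normal_invI[OF H_subgroup])
  fix x h assume "x \<in> carrier G" "h \<in> H"
  then show "x \<otimes> h \<otimes> inv x \<in> H" using subgroup.mem_carrier[OF H_subgroup] by (simp add: H_central m_assoc)
qed

lemma K_eq: "K = {nf (int p ^ \<delta> * i) (int p ^ \<delta> * j) k | i j k. True}"
proof
  have "a [^] (p ^ \<delta>) = nf (int p ^ \<delta> * 1) (int p ^ \<delta> * 0) 0"
    and "b [^] (p ^ \<delta>) = nf (int p ^ \<delta> * 0) (int p ^ \<delta> * 1) 0"
    and "c = nf (int p ^ \<delta> * 0) (int p ^ \<delta> * 0) 1"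
    by (simp_all add: nf_def pow_p_power)
  then show "K \<subseteq> {nf (int p ^ \<delta> * i) (int p ^ \<delta> * j) k | i j k. True}"
    by (intro generate_subgroup_incl nf_lattice_subgroup) blast
next
  have K: "subgroup K G" by (rule generate_is_subgroup) simp
  have gens: "a [^] (p ^ \<delta>) \<in> K" "b [^] (p ^ \<delta>) \<in> K" "c \<in> K" by (simp_all add: generate.incl)
  show "{nf (int p ^ \<delta> * i) (int p ^ \<delta> * j) k | i j k. True} \<subseteq> K"
  proof clarify
    fix i j k
    have "nf (int p ^ \<delta> * i) (int p ^ \<delta> * j) k =
        (a [^] (p ^ \<delta>)) [^] i \<otimes> (b [^] (p ^ \<delta>)) [^] j \<otimes> c [^] k"
      by (simp add: nf_def pow_p_power int_pow_pow)
    also have "\<dots> \<in> K"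
      by (intro subgroup.m_closed[OF K] subgroup_int_pow_closed[OF K] gens)
    finally show "nf (int p ^ \<delta> * i) (int p ^ \<delta> * j) k \<in> K" .
  qed
qed

lemma H_subset_K: "H \<subseteq> K"
  unfolding H_eq K_eq by (force intro: exI[of _ 0])

lemma Q_group: "group Q"
  using H_normal H_subset_K
  by (intro normal.factorgroup_is_group normal_restrict_supergroup generate_is_subgroup) auto

definition qnf :: "int \<Rightarrow> int \<Rightarrow> int \<Rightarrow> 'a set" where
  "qnf i j k = H #> nf (int p ^ \<delta> * i) (int p ^ \<delta> * j) k"

lemma carrier_Q: "carrier Q = {qnf i j k | i j k. True}"
proof -
  have "carrier Q = (\<lambda>x. H #> x) ` K" by (simp add: carrier_FactGroup r_coset_def)
  then show ?thesis by (auto simp: K_eq qnf_def)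
qed

lemma qnf_closed [simp]: "qnf i j k \<in> carrier Q"
  using carrier_Q by blast

lemma rcos_nf_shift:
  assumes "int p ^ d dvd k - k'"
  shows "H #> nf i j k = H #> nf i j k'"
proof -
  obtain m where "k = int p ^ d * m + k'" using assms by (metis dvdE diff_add_cancel)
  then have "nf i j k = nf 0 0 (int p ^ d * m) \<otimes> nf i j k'" by (simp add: nf_mult)
  moreover have "nf 0 0 (int p ^ d * m) \<in> H" by (auto simp: H_eq)
  ultimately show ?thesis
    by (simp add: coset_join2 H_subgroup subgroup.subset flip: coset_mult_assoc)
qed

lemma qnf_mult: "qnf i j k \<otimes>\<^bsub>Q\<^esub> qnf i' j' k' = qnf (i + i') (j + j') (k + k')"
proof -
  have "qnf i j k \<otimes>\<^bsub>Q\<^esub> qnf i' j' k' =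
      H #> (nf (int p ^ \<delta> * i) (int p ^ \<delta> * j) k \<otimes> nf (int p ^ \<delta> * i') (int p ^ \<delta> * j') k')"
    by (simp add: qnf_def set_mult_def normal.rcos_sum[OF H_normal, simplified set_mult_def])
  also have "\<dots> = H #> nf (int p ^ \<delta> * (i + i')) (int p ^ \<delta> * (j + j'))
      (k + k' - int p ^ \<delta> * j * (int p ^ \<delta> * i'))"
    by (simp add: nf_mult algebra_simps)
  also have "\<dots> = qnf (i + i') (j + j') (k + k')"
    unfolding qnf_def using d_le_delta by (intro rcos_nf_shift) (simp add: le_imp_power_dvd)
  finally show ?thesis .
qed

lemma qnf_eq_one_iff:
  "qnf i j k = \<one>\<^bsub>Q\<^esub> \<longleftrightarrow> int p ^ (\<gamma> - \<delta>) dvd i \<and> int p ^ (\<gamma> - \<delta>) dvd j \<and>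
     int p ^ d dvd k + int p ^ \<rho> * (i div int p ^ (\<gamma> - \<delta>))"
  (is "_ \<longleftrightarrow> ?kernel")
proof -
  have N: "int p ^ \<gamma> = int p ^ \<delta> * int p ^ (\<gamma> - \<delta>)"
    using delta_le_gamma by (simp flip: power_add)
  have "qnf i j k = \<one>\<^bsub>Q\<^esub> \<longleftrightarrow> nf (int p ^ \<delta> * i) (int p ^ \<delta> * j) k \<in> H"
    unfolding qnf_def using coset_join1[OF _ _ H_subgroup] coset_join2[OF _ H_subgroup] by auto
  also have "\<dots> \<longleftrightarrow> ?kernel"
    using p_pos by (simp add: nf_mem_H_iff N)
  finally show ?thesis .
qed

lemma quotient_iso_split:
  assumes "\<rho> \<le> d" "\<rho> < \<gamma> - \<delta>"
  shows "Q \<cong> cyc (p ^ (\<gamma> - \<delta> + d - \<rho>)) \<times>\<times> (cyc (p ^ (\<gamma> - \<delta>)) \<times>\<times> cyc (p ^ \<rho>))"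
proof -
  \<comment> \<open>The factor of order p^\<rho> is generated by x^e c^-1 with x = a^(p^\<delta>), since
    x^(p^(\<gamma>-\<delta>)) = c^(p^\<rho>).\<close>
  define e where "e = int p ^ (\<gamma> - \<delta> - \<rho>)"
  have eR: "e * int p ^ \<rho> = int p ^ (\<gamma> - \<delta>)"
    using assms by (simp add: e_def flip: power_add)
  have pows: "int p ^ (\<gamma> - \<delta> + d - \<rho>) = int p ^ (\<gamma> - \<delta>) * int p ^ (d - \<rho>)"
    "int p ^ d = int p ^ \<rho> * int p ^ (d - \<rho>)"
    using assms by (simp_all flip: power_add)
  show ?thesis
  proof (rule iso_cyc3I[OF Q_group, where \<phi> = "\<lambda>u v w. qnf (u + e * w) v (- w)"])
    fix u v w
    have "qnf (u + e * w) v (- w) = \<one>\<^bsub>Q\<^esub> \<longleftrightarrow>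
        int p ^ (\<gamma> - \<delta>) dvd u + e * w \<and> int p ^ (\<gamma> - \<delta>) dvd v \<and>
        int p ^ d dvd - w + int p ^ \<rho> * ((u + e * w) div int p ^ (\<gamma> - \<delta>))"
      by (rule qnf_eq_one_iff)
    also have "\<dots> \<longleftrightarrow> int p ^ (\<gamma> - \<delta> + d - \<rho>) dvd u \<and> int p ^ (\<gamma> - \<delta>) dvd v \<and> int p ^ \<rho> dvd w"
      using relation_lattice_split_coords[OF eR, where S = "int p ^ (d - \<rho>)" and u = u and w = w] p_pos
      unfolding pows by auto
    finally show "qnf (u + e * w) v (- w) = \<one>\<^bsub>Q\<^esub> \<longleftrightarrow>
        int (p ^ (\<gamma> - \<delta> + d - \<rho>)) dvd u \<and> int (p ^ (\<gamma> - \<delta>)) dvd v \<and> int (p ^ \<rho>) dvd w"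
      by simp
  next
    fix q assume "q \<in> carrier Q"
    then obtain i j k where "q = qnf i j k" using carrier_Q by blast
    then show "\<exists>u v w. q = qnf (u + e * w) v (- w)"
      by (intro exI[of _ "i + e * k"] exI[of _ j] exI[of _ "- k"]) simp
  next
    fix u v w u' v' w'
    show "qnf (u + u' + e * (w + w')) (v + v') (- (w + w')) =
        qnf (u + e * w) v (- w) \<otimes>\<^bsub>Q\<^esub> qnf (u' + e * w') v' (- w')"
      unfolding qnf_mult by (simp add: algebra_simps)
  qed (simp_all add: p_pos)
qed

lemma quotient_iso_diag:
  assumes "d \<le> \<rho> \<or> \<gamma> - \<delta> \<le> \<rho>"
  shows "Q \<cong> cyc (p ^ (\<gamma> - \<delta>)) \<times>\<times> (cyc (p ^ (\<gamma> - \<delta>)) \<times>\<times> cyc (p ^ d))"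
proof -
  \<comment> \<open>If \<gamma> - \<delta> \<le> \<rho>, then x c^-f with x = a^(p^\<delta>) has order p^(\<gamma>-\<delta>); otherwise d \<le> \<rho>
    and already c^(p^\<rho>) = 1 in K/H.\<close>
  define f where "f = (if \<gamma> - \<delta> \<le> \<rho> then int p ^ (\<rho> - (\<gamma> - \<delta>)) else 0)"
  have "int p ^ d dvd int p ^ \<rho> - f * int p ^ (\<gamma> - \<delta>)"
    using assms by (auto simp: f_def le_imp_power_dvd simp flip: power_add)
  note kernel = relation_lattice_diag_coords[OF this]
  show ?thesis
  proof (rule iso_cyc3I[OF Q_group, where \<phi> = "\<lambda>u v w. qnf u v (w - f * u)"])
    fix u v w
    show "qnf u v (w - f * u) = \<one>\<^bsub>Q\<^esub> \<longleftrightarrow>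
        int (p ^ (\<gamma> - \<delta>)) dvd u \<and> int (p ^ (\<gamma> - \<delta>)) dvd v \<and> int (p ^ d) dvd w"
      unfolding qnf_eq_one_iff using kernel[where u = u and w = w] by auto
  next
    fix q assume "q \<in> carrier Q"
    then obtain i j k where "q = qnf i j k" using carrier_Q by blast
    then show "\<exists>u v w. q = qnf u v (w - f * u)"
      by (intro exI[of _ i] exI[of _ j] exI[of _ "k + f * i"]) simp
  next
    fix u v w u' v' w'
    show "qnf (u + u') (v + v') (w + w' - f * (u + u')) =
        qnf u v (w - f * u) \<otimes>\<^bsub>Q\<^esub> qnf u' v' (w' - f * u')"
      unfolding qnf_mult by (simp add: algebra_simps)
  qed (simp_all add: p_pos)
qed

end

theorem lemma4p4:
  fixes G :: "('a, 'b) monoid_scheme" and p \<gamma> \<rho> \<delta> :: nat and a b :: 'a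
  assumes "Factorial_Ring.prime p" and "odd p"
    and "1 \<le> \<gamma>" and "\<rho> \<le> \<gamma>"
    and "presented_G G p \<gamma> \<rho> a b"
    and "1 \<le> \<delta>" and "\<delta> \<le> \<gamma>"
  defines "c \<equiv> commutator G a b"
  defines "K \<equiv> generate G {a [^]\<^bsub>G\<^esub> (p ^ \<delta>), b [^]\<^bsub>G\<^esub> (p ^ \<delta>), c}"
  shows
    "(G\<lparr>carrier := K\<rparr>) Mod (generate G {c [^]\<^bsub>G\<^esub> (p ^ \<delta>)}) \<cong>
       (if \<rho> < \<delta> \<and> \<delta> < \<gamma> - \<rho>
        then cyc (p ^ (\<gamma> - \<rho>)) \<times>\<times> (cyc (p ^ (\<gamma> - \<delta>)) \<times>\<times> cyc (p ^ \<rho>))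
        else cyc (p ^ (\<gamma> - \<delta>)) \<times>\<times> (cyc (p ^ (\<gamma> - \<delta>)) \<times>\<times> cyc (p ^ \<delta>)))
   \<and> (G\<lparr>carrier := K\<rparr>) Mod (generate G {c [^]\<^bsub>G\<^esub> (p ^ (\<delta> - 1))}) \<cong>
       (if \<rho> < \<delta> \<and> \<delta> < \<gamma> - \<rho>
        then cyc (p ^ (\<gamma> - \<rho> - 1)) \<times>\<times> (cyc (p ^ (\<gamma> - \<delta>)) \<times>\<times> cyc (p ^ \<rho>))
        else cyc (p ^ (\<gamma> - \<delta>)) \<times>\<times> (cyc (p ^ (\<gamma> - \<delta>)) \<times>\<times> cyc (p ^ (\<delta> - 1))))"
proof -
  have "0 < p" using assms(1) by (simp add: prime_gt_0_nat)
  then have quotients: "presented_quotient G p \<gamma> \<rho> a b \<delta> d" if "d \<le> \<delta>" for d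
    using assms(5,7) that
    by (simp add: presented_quotient_def presented_quotient_axioms_def presented_group_def
        presented_group_axioms_def presented_G_def)
  interpret top: presented_quotient G p \<gamma> \<rho> a b \<delta> \<delta> by (rule quotients) simp
  interpret low: presented_quotient G p \<gamma> \<rho> a b \<delta> "\<delta> - 1" by (rule quotients) simp
  show ?thesis
  proof (cases "\<rho> < \<delta> \<and> \<delta> < \<gamma> - \<rho>")
    case True
    then have exps: "\<gamma> - \<delta> + \<delta> - \<rho> = \<gamma> - \<rho>" "\<gamma> - \<delta> + (\<delta> - 1) - \<rho> = \<gamma> - \<rho> - 1"
      by auto
    have "top.Q \<cong> cyc (p ^ (\<gamma> - \<delta> + \<delta> - \<rho>)) \<times>\<times> (cyc (p ^ (\<gamma> - \<delta>)) \<times>\<times> cyc (p ^ \<rho>))"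
      and "low.Q \<cong> cyc (p ^ (\<gamma> - \<delta> + (\<delta> - 1) - \<rho>)) \<times>\<times> (cyc (p ^ (\<gamma> - \<delta>)) \<times>\<times> cyc (p ^ \<rho>))"
      using True by (intro top.quotient_iso_split low.quotient_iso_split; linarith)+
    then show ?thesis unfolding c_def K_def if_P[OF True] exps by (rule conjI)
  next
    case False
    have "top.Q \<cong> cyc (p ^ (\<gamma> - \<delta>)) \<times>\<times> (cyc (p ^ (\<gamma> - \<delta>)) \<times>\<times> cyc (p ^ \<delta>))"
      and "low.Q \<cong> cyc (p ^ (\<gamma> - \<delta>)) \<times>\<times> (cyc (p ^ (\<gamma> - \<delta>)) \<times>\<times> cyc (p ^ (\<delta> - 1)))"
      using False by (intro top.quotient_iso_diag low.quotient_iso_diag; linarith)+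
    then show ?thesis unfolding c_def K_def if_not_P[OF False] by (rule conjI)
  qed
qed

end
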